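(* Consider the admission control model described in the context, with discount rate $\alpha>0$, and suppose: (i) $0\le \Delta d_{i+1}\le \Delta d_i$ for $1\le i\le n-1$, and $\Delta d_1>0$; (ii) $\Delta h_{i+1}\ge \Delta h_i\ge 0$ for $1\le i\le n-1$. Define $\nu_0,\dots,\nu_{n-1}$ recursively by $$\nu_0=\frac{\Delta h_1}{\alpha+\Delta d_1},\qquad \nu_j=\nu_{j-1}+\frac{\Delta h_{j+1}-\nu_{j-1}(\alpha+\Delta d_{j+1})}{\alpha+\Delta d_{j+1}+w^{S_{j+1}}_{j-1}/\rho_{j-1}},\quad 1\le j\le n-1.$$ Then the model is PCL-indexable relative to threshold policies and the rejection measure, in the following sense: (a) $w^S_i>0$ for every $S\in\mathcal F$ and $0\le i\le n-1$, and $\nu_0\le\nu_1\le\cdots\le\nu_{n-1}$; (b) the $\nu$-charge problem is indexable relative to threshold policies with dynamic allocation indices $\nu_j$: for every $\nu\in\mathbb R$, the set of states $j\in\{0,\dots,n-1\}$ at which shutting the gate is optimal in the $\nu$-charge problem equals $\{j: \nu\le \nu_j\}$ (which belongs to $\mathcal F$ and decreases from $\{0,\dots,n-1\}$ to $\emptyset$ as $\nu$ increases from $-\infty$ to $+\infty$); (c) for every $j\in\{0,\dots,n-1\}$, $$\nu_j=\max\left\{\frac{v^{S\setminus\{j\}}_j-v^S_j}{b^S_j-b^{S\setminus\{j\}}_j}:\ j\in S\in\{S_1,\dots,S_n\}\right\}.$$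
   Context: Admission control model: a single-server queue with finite buffer, whose number in system $L(t)\in N=\{0,1,\dots,n\}$ ($n\ge1$) evolves in continuous time. In state $i$ customers arrive as a Poisson stream of rate $\lambda_i>0$ and the server completes services at rate $\mu_i>0$ ($1\le i\le n$), with $\mu_0=0$. A gatekeeper chooses at each time an action $a(t)\in\{0,1\}$: $a=1$ (shut the entry gate; arriving customers are rejected) or $a=0$ (open; arriving customers are admitted). In state $n$ the gate is always shut. Policies are stationary (possibly randomized) functions of the state. Holding costs accrue at rate $h_i$ in state $i$, and are discounted at rate $\alpha>0$. For a policy $u$ and initial state $i$: $v^u_i=E^u_i[\int_0^\infty h_{L(t)}e^{-\alpha t}dt]$ and $b^u_i=E^u_i[\int_0^\infty \lambda_{L(t)}a(t)e^{-\alpha t}dt]$ (expected discounted number of rejections). The $\nu$-charge problem is to minimize $v^u_i+\nu b^u_i$ over stationary policies. For $S\subseteq\{0,\dots,n-1\}$, the $S$-active policy shuts the gate exactly in states $S\cup\{n\}$; write $v^S_i,b^S_i$ for its measures. Marginal workloads: $w^S_i=\lambda_i\,[1-(b^S_{i+1}-b^S_i)]$ for $0\le i\le n-1$. Threshold sets: $S_k=\{k-1,\dots,n-1\}$ for $1\le k\le n$, $S_{n+1}=\emptyset$, and $\mathcal F=\{S_1,\dots,S_{n+1}\}$. Notation: $\Delta x_i=x_i-x_{i-1}$; $d_i=\mu_i-\lambda_i$ (so $d_0=-\lambda_0$); $\rho_i=\lambda_i/\mu_{i+1}$. *)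

theory Defs
  imports Complex_Main
begin

text \<open>States are 0..n. A stationary randomized policy is given by u i = probability
  of shutting the gate in state i (i < n); in state n the gate is always shut.\<close>

definition shutp :: "nat \<Rightarrow> (nat \<Rightarrow> real) \<Rightarrow> nat \<Rightarrow> real" where
  "shutp n u i = (if i < n then u i else 1)"

definition policy :: "nat \<Rightarrow> (nat \<Rightarrow> real) \<Rightarrow> bool" where
  "policy n u \<longleftrightarrow> (\<forall>i<n. 0 \<le> u i \<and> u i \<le> 1)"

text \<open>Expected total alpha-discounted reward under policy u with reward rate r,
  as a function of the initial state: the unique solution of the policy-evaluation
  (resolvent) equations of the controlled birth-death chain.\<close>

definition evalm :: "nat \<Rightarrow> real \<Rightarrow> (nat \<Rightarrow> real) \<Rightarrow> (nat \<Rightarrow> real) \<Rightarrow> (nat \<Rightarrow> real)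
     \<Rightarrow> (nat \<Rightarrow> real) \<Rightarrow> nat \<Rightarrow> real" where
  "evalm n \<alpha> lam mu r u = (THE f.
      (\<forall>i\<le>n. \<alpha> * f i = r i + lam i * (1 - shutp n u i) * (f (Suc i) - f i)
                        + mu i * (f (i - 1) - f i)) \<and> (\<forall>i>n. f i = 0))"

definition vm :: "nat \<Rightarrow> real \<Rightarrow> (nat \<Rightarrow> real) \<Rightarrow> (nat \<Rightarrow> real) \<Rightarrow> (nat \<Rightarrow> real)
     \<Rightarrow> (nat \<Rightarrow> real) \<Rightarrow> nat \<Rightarrow> real" where
  "vm n \<alpha> lam mu h u = evalm n \<alpha> lam mu h u"

definition bm :: "nat \<Rightarrow> real \<Rightarrow> (nat \<Rightarrow> real) \<Rightarrow> (nat \<Rightarrow> real)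
     \<Rightarrow> (nat \<Rightarrow> real) \<Rightarrow> nat \<Rightarrow> real" where
  "bm n \<alpha> lam mu u = evalm n \<alpha> lam mu (\<lambda>i. lam i * shutp n u i) u"

definition setpol :: "nat set \<Rightarrow> nat \<Rightarrow> real" where
  "setpol S i = (if i \<in> S then 1 else 0)"

definition thr :: "nat \<Rightarrow> nat \<Rightarrow> nat set" where
  "thr n k = {k - 1..<n}"

definition thrF :: "nat \<Rightarrow> nat set set" where
  "thrF n = thr n ` {1..n+1}"

definition wS :: "nat \<Rightarrow> real \<Rightarrow> (nat \<Rightarrow> real) \<Rightarrow> (nat \<Rightarrow> real) \<Rightarrow> nat set \<Rightarrow> nat \<Rightarrow> real" where
  "wS n \<alpha> lam mu S i = lam i * (1 - (bm n \<alpha> lam mu (setpol S) (Suc i) - bm n \<alpha> lam mu (setpol S) i))"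

definition dlt :: "(nat \<Rightarrow> real) \<Rightarrow> nat \<Rightarrow> real" where
  "dlt x i = x i - x (i - 1)"

definition dd :: "(nat \<Rightarrow> real) \<Rightarrow> (nat \<Rightarrow> real) \<Rightarrow> nat \<Rightarrow> real" where
  "dd lam mu i = mu i - lam i"

definition rho :: "(nat \<Rightarrow> real) \<Rightarrow> (nat \<Rightarrow> real) \<Rightarrow> nat \<Rightarrow> real" where
  "rho lam mu i = lam i / mu (Suc i)"

fun nuidx :: "nat \<Rightarrow> real \<Rightarrow> (nat \<Rightarrow> real) \<Rightarrow> (nat \<Rightarrow> real) \<Rightarrow> (nat \<Rightarrow> real) \<Rightarrow> nat \<Rightarrow> real" where
  "nuidx n \<alpha> lam mu h 0 = dlt h 1 / (\<alpha> + dlt (dd lam mu) 1)"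
| "nuidx n \<alpha> lam mu h (Suc j) = nuidx n \<alpha> lam mu h j
     + (dlt h (j + 2) - nuidx n \<alpha> lam mu h j * (\<alpha> + dlt (dd lam mu) (j + 2)))
       / (\<alpha> + dlt (dd lam mu) (j + 2) + wS n \<alpha> lam mu (thr n (j + 2)) j / rho lam mu j)"

definition optimal :: "nat \<Rightarrow> real \<Rightarrow> (nat \<Rightarrow> real) \<Rightarrow> (nat \<Rightarrow> real) \<Rightarrow> (nat \<Rightarrow> real)
     \<Rightarrow> real \<Rightarrow> (nat \<Rightarrow> real) \<Rightarrow> bool" where
  "optimal n \<alpha> lam mu h \<nu> u \<longleftrightarrow> policy n u \<and>
     (\<forall>u'. policy n u' \<longrightarrow> (\<forall>i\<le>n. vm n \<alpha> lam mu h u i + \<nu> * bm n \<alpha> lam mu u i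
                                   \<le> vm n \<alpha> lam mu h u' i + \<nu> * bm n \<alpha> lam mu u' i))"

definition shut_optimal :: "nat \<Rightarrow> real \<Rightarrow> (nat \<Rightarrow> real) \<Rightarrow> (nat \<Rightarrow> real) \<Rightarrow> (nat \<Rightarrow> real)
     \<Rightarrow> real \<Rightarrow> nat \<Rightarrow> bool" where
  "shut_optimal n \<alpha> lam mu h \<nu> j \<longleftrightarrow> (\<exists>u. optimal n \<alpha> lam mu h \<nu> u \<and> u j = 1)"

end

theory Submission
  imports Defs
begin

text \<open>Under the threshold policy \<open>S\<^sub>m\<^sub>+\<^sub>1\<close> (shut exactly in the states \<open>\<ge> m\<close>) the values and
  marginal workloads solve tridiagonal birth-death resolvent equations, for which a discrete
  minimum principle gives uniqueness, positivity of Green functions and a policy-improvement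
  (verification) criterion for optimality. The index \<open>\<nu>\<^sub>j\<close> is the charge making the gatekeeper
  indifferent in state \<open>j\<close> under \<open>S\<^sub>j\<^sub>+\<^sub>1\<close>. Conditions (i) and (ii) make
  \<open>\<Delta>h\<^sub>i\<^sub>+\<^sub>1 - \<nu>(\<alpha> + \<Delta>d\<^sub>i\<^sub>+\<^sub>1)\<close> stay nonnegative once it is, which gives positive marginal workloads
  and increasing indices. Moving the threshold by one state changes the reduced costs by a
  sign-definite multiple of a Green function increment, so for the first \<open>j\<close> with \<open>\<nu> \<le> \<nu>\<^sub>j\<close>
  the reduced costs of \<open>S\<^sub>j\<^sub>+\<^sub>1\<close> have the signs the verification criterion asks for, and \<open>\<nu>\<^sub>j\<close> is
  the largest of the ratios in (c).\<close>

section \<open>Resolvent equations of a birth-death chain\<close>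

definition solves_resolvent ::
  "nat \<Rightarrow> real \<Rightarrow> (nat \<Rightarrow> real) \<Rightarrow> (nat \<Rightarrow> real) \<Rightarrow> (nat \<Rightarrow> real) \<Rightarrow> (nat \<Rightarrow> real) \<Rightarrow> bool"
where
  "solves_resolvent n a p q r f \<longleftrightarrow>
     (\<forall>i\<le>n. a * f i = r i + p i * (f (Suc i) - f i) + q i * (f (i - 1) - f i)) \<and> (\<forall>i>n. f i = 0)"

lemma resolvent_minimum_principle:
  fixes f p q :: "nat \<Rightarrow> real"
  assumes a: "a > 0" and p: "\<And>i. i \<le> n \<Longrightarrow> p i \<ge> 0" and q: "\<And>i. i \<le> n \<Longrightarrow> q i \<ge> 0"
    and boundary: "f (Suc n) \<ge> 0"
    and super: "\<And>i. i \<le> n \<Longrightarrow> p i * (f (Suc i) - f i) + q i * (f (i - 1) - f i) \<le> a * f i"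
    and i: "i \<le> n"
  shows "f i \<ge> 0"
proof -
  obtain k where k: "k \<le> n" and kmin: "\<And>i. i \<le> n \<Longrightarrow> f k \<le> f i"
    using ex_is_arg_min_if_finite[of "{..n}" f] by (auto simp: is_arg_min_def not_less)
  have "f k \<ge> 0"
  proof (rule ccontr)
    assume neg: "\<not> f k \<ge> 0"
    have "f (Suc k) \<ge> f k"
    proof (cases "k < n")
      case True
      then show ?thesis using kmin by simp
    next
      case False
      then show ?thesis using k boundary neg by (simp add: not_less le_antisym)
    qed
    then have "p k * (f (Suc k) - f k) \<ge> 0" using p k by simp
    moreover have "q k * (f (k - 1) - f k) \<ge> 0" using q kmin k by simp
    ultimately have "a * f k \<ge> 0" using super[OF k] by linarith
    then show False using neg a by (simp add: zero_le_mult_iff)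
  qed
  then show ?thesis using kmin[OF i] by simp
qed

lemma solves_resolvent_nonneg:
  assumes a: "a > 0" and p: "\<And>i. i \<le> n \<Longrightarrow> p i \<ge> 0" and q: "\<And>i. i \<le> n \<Longrightarrow> q i \<ge> 0"
    and r: "\<And>i. i \<le> n \<Longrightarrow> r i \<ge> 0" and f: "solves_resolvent n a p q r f"
    and i: "i \<le> n"
  shows "f i \<ge> 0"
proof (rule resolvent_minimum_principle[OF a p q _ _ i])
  show "f (Suc n) \<ge> 0" using f by (simp add: solves_resolvent_def)
  show "p i * (f (Suc i) - f i) + q i * (f (i - 1) - f i) \<le> a * f i" if "i \<le> n" for i
    using f r[OF that] that unfolding solves_resolvent_def by fastforce
qed

lemma solves_resolvent_pos:
  assumes a: "a > 0" and p: "\<And>i. i \<le> n \<Longrightarrow> p i \<ge> 0" and q: "\<And>i. i \<le> n \<Longrightarrow> q i \<ge> 0"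
    and r: "\<And>i. i \<le> n \<Longrightarrow> r i \<ge> 0" and f: "solves_resolvent n a p q r f"
    and j: "j \<le> n" and rj: "r j > 0"
  shows "f j > 0"
proof (rule ccontr)
  assume "\<not> f j > 0"
  then have zero: "f j = 0" using solves_resolvent_nonneg[OF a p q r f j] by simp
  have "f (Suc j) \<ge> 0"
    using solves_resolvent_nonneg[OF a p q r f] f by (cases "Suc j \<le> n") (auto simp: solves_resolvent_def)
  then have "p j * (f (Suc j) - f j) \<ge> 0" using p[OF j] zero by simp
  moreover have "q j * (f (j - 1) - f j) \<ge> 0"
    using q[OF j] zero solves_resolvent_nonneg[OF a p q r f, of "j - 1"] j by simp
  ultimately have "a * f j > 0" using f j rj unfolding solves_resolvent_def by fastforce
  then show False using zero by simp
qed

lemma solves_resolvent_lincomb: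
  assumes f: "solves_resolvent n a p q r f" and g: "solves_resolvent n a p q r' g"
  shows "solves_resolvent n a p q (\<lambda>i. r i + c * r' i) (\<lambda>i. f i + c * g i)"
  unfolding solves_resolvent_def
proof (intro conjI allI impI)
  fix i assume "i \<le> n"
  then have ef: "a * f i = r i + p i * (f (Suc i) - f i) + q i * (f (i - 1) - f i)"
    and eg: "a * g i = r' i + p i * (g (Suc i) - g i) + q i * (g (i - 1) - g i)"
    using f g unfolding solves_resolvent_def by auto
  have "a * (f i + c * g i) = a * f i + c * (a * g i)" by (simp add: algebra_simps)
  also have "\<dots> = r i + c * r' i + p i * (f (Suc i) + c * g (Suc i) - (f i + c * g i))
                   + q i * (f (i - 1) + c * g (i - 1) - (f i + c * g i))"
    unfolding ef eg by (simp add: algebra_simps)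
  finally show "a * (f i + c * g i) = r i + c * r' i + p i * (f (Suc i) + c * g (Suc i) - (f i + c * g i))
                                   + q i * (f (i - 1) + c * g (i - 1) - (f i + c * g i))" .
qed (use f g in \<open>simp add: solves_resolvent_def\<close>)

lemma solves_resolvent_unique:
  assumes a: "a > 0" and p: "\<And>i. i \<le> n \<Longrightarrow> p i \<ge> 0" and q: "\<And>i. i \<le> n \<Longrightarrow> q i \<ge> 0"
    and f: "solves_resolvent n a p q r f" and g: "solves_resolvent n a p q r g"
  shows "f = g"
proof
  fix i
  show "f i = g i"
  proof (cases "i \<le> n")
    case True
    have "f i + -1 * g i \<ge> 0" "g i + -1 * f i \<ge> 0"
      using solves_resolvent_nonneg[OF a p q _ solves_resolvent_lincomb[OF f g, where c="-1"] True]
        solves_resolvent_nonneg[OF a p q _ solves_resolvent_lincomb[OF g f, where c="-1"] True] by simp_all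
    then show ?thesis by simp
  next
    case False
    then show ?thesis using f g by (simp add: solves_resolvent_def)
  qed
qed

text \<open>Existence: Gaussian elimination for the tridiagonal system (Thomas algorithm). Forward
  elimination gives \<open>f i = thomas_offset i + thomas_gain i * f (Suc i)\<close>; the gains stay in
  \<open>[0, 1]\<close>, so no pivot vanishes.\<close>

primrec thomas_gain :: "real \<Rightarrow> (nat \<Rightarrow> real) \<Rightarrow> (nat \<Rightarrow> real) \<Rightarrow> nat \<Rightarrow> real" where
  "thomas_gain a p q 0 = p 0 / (a + p 0)"
| "thomas_gain a p q (Suc i) =
     p (Suc i) / (a + p (Suc i) + q (Suc i) * (1 - thomas_gain a p q i))"

primrec thomas_offset :: "real \<Rightarrow> (nat \<Rightarrow> real) \<Rightarrow> (nat \<Rightarrow> real) \<Rightarrow> (nat \<Rightarrow> real) \<Rightarrow> nat \<Rightarrow> real" where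
  "thomas_offset a p q r 0 = r 0 / (a + p 0)"
| "thomas_offset a p q r (Suc i) = (r (Suc i) + q (Suc i) * thomas_offset a p q r i)
     / (a + p (Suc i) + q (Suc i) * (1 - thomas_gain a p q i))"

text \<open>Back substitution; \<open>thomas_back a p q r n k\<close> is the value at state \<open>n - k\<close>.\<close>

primrec thomas_back ::
  "real \<Rightarrow> (nat \<Rightarrow> real) \<Rightarrow> (nat \<Rightarrow> real) \<Rightarrow> (nat \<Rightarrow> real) \<Rightarrow> nat \<Rightarrow> nat \<Rightarrow> real" where
  "thomas_back a p q r n 0 = thomas_offset a p q r n"
| "thomas_back a p q r n (Suc k) =
     thomas_offset a p q r (n - Suc k) + thomas_gain a p q (n - Suc k) * thomas_back a p q r n k"

lemma thomas_gain_bounds: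
  assumes a: "a > 0" and p: "\<And>i. i \<le> n \<Longrightarrow> p i \<ge> 0" and q: "\<And>i. i \<le> n \<Longrightarrow> q i \<ge> 0"
    and i: "i \<le> n"
  shows "0 \<le> thomas_gain a p q i \<and> thomas_gain a p q i \<le> 1"
  using i
proof (induction i)
  case 0
  then show ?case using a p[of 0] by auto
next
  case (Suc i)
  then have "q (Suc i) * (1 - thomas_gain a p q i) \<ge> 0" using q by simp
  then show ?case using a p[OF Suc.prems] by (auto simp: divide_simps)
qed

lemma solves_resolvent_exists:
  assumes a: "a > 0" and p: "\<And>i. i \<le> n \<Longrightarrow> p i \<ge> 0" and q: "\<And>i. i \<le> n \<Longrightarrow> q i \<ge> 0"
  shows "\<exists>f. solves_resolvent n a p q r f"
proof -
  define f where "f i = (if i \<le> n then thomas_back a p q r n (n - i) else 0)" for i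
  have elim_step: "f i = thomas_offset a p q r i + thomas_gain a p q i * f (Suc i)" if "i \<le> n" for i
  proof (cases "i < n")
    case True
    then have "n - i = Suc (n - Suc i)" "n - Suc (n - Suc i) = i" by auto
    then show ?thesis using True unfolding f_def by simp
  next
    case False
    then show ?thesis using that unfolding f_def by simp
  qed
  have pivot: "a + p (Suc i) + q (Suc i) * (1 - thomas_gain a p q i) > 0" if "Suc i \<le> n" for i
  proof -
    have "q (Suc i) * (1 - thomas_gain a p q i) \<ge> 0"
      using thomas_gain_bounds[of a n p q, OF a p q, of i] q[OF that] that by simp
    then show ?thesis using p[OF that] a by simp
  qed
  have "a * f i = r i + p i * (f (Suc i) - f i) + q i * (f (i - 1) - f i)" if i: "i \<le> n" for i
  proof (cases i)
    case 0
    have "f 0 = (r 0 + p 0 * f 1) / (a + p 0)"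
      using elim_step[of 0] by (simp add: add_divide_distrib)
    moreover have "a + p 0 > 0" using a p[of 0] by simp
    ultimately have "f 0 * (a + p 0) = r 0 + p 0 * f 1" by simp
    then show ?thesis using 0 by (simp add: algebra_simps)
  next
    case (Suc j)
    let ?P = "a + p (Suc j) + q (Suc j) * (1 - thomas_gain a p q j)"
    have "f (Suc j) = (r (Suc j) + q (Suc j) * thomas_offset a p q r j + p (Suc j) * f (Suc (Suc j))) / ?P"
      using elim_step[of "Suc j"] i Suc by (simp add: add_divide_distrib)
    then have "f (Suc j) * ?P = r (Suc j) + q (Suc j) * thomas_offset a p q r j + p (Suc j) * f (Suc (Suc j))"
      using pivot[of j] i Suc by simp
    moreover have "f j = thomas_offset a p q r j + thomas_gain a p q j * f (Suc j)"
      using elim_step[of j] i Suc by simp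
    ultimately show ?thesis unfolding Suc by (simp add: algebra_simps)
  qed
  then have "solves_resolvent n a p q r f" unfolding solves_resolvent_def f_def by auto
  then show ?thesis by blast
qed

lemma solves_resolvent_perturb:
  assumes f: "solves_resolvent n a p q r f"
    and g: "solves_resolvent n a p' q (\<lambda>i. if i = j then 1 else 0) g"
    and pp': "\<And>i. i \<noteq> j \<Longrightarrow> p i = p' i" and rr': "\<And>i. i \<noteq> j \<Longrightarrow> r i = r' i"
  shows "solves_resolvent n a p' q r'
           (\<lambda>i. f i + (r' j - r j + (p' j - p j) * (f (Suc j) - f j)) * g i)"
  unfolding solves_resolvent_def
proof (intro conjI allI impI)
  fix i assume i: "i \<le> n"
  let ?c = "r' j - r j + (p' j - p j) * (f (Suc j) - f j)"
  have ef: "a * f i = r i + p i * (f (Suc i) - f i) + q i * (f (i - 1) - f i)"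
    and eg: "a * g i = (if i = j then 1 else 0) + p' i * (g (Suc i) - g i) + q i * (g (i - 1) - g i)"
    using f g i unfolding solves_resolvent_def by auto
  have "a * (f i + ?c * g i) = a * f i + ?c * (a * g i)" by (simp add: algebra_simps)
  also have "\<dots> = r' i + p' i * (f (Suc i) + ?c * g (Suc i) - (f i + ?c * g i))
                  + q i * (f (i - 1) + ?c * g (i - 1) - (f i + ?c * g i))"
    unfolding ef eg using pp'[of i] rr'[of i] by (cases "i = j") (simp_all add: algebra_simps)
  finally show "a * (f i + ?c * g i) = r' i + p' i * (f (Suc i) + ?c * g (Suc i) - (f i + ?c * g i))
                  + q i * (f (i - 1) + ?c * g (i - 1) - (f i + ?c * g i))" .
next
  fix i assume "i > n"
  then show "f i + (r' j - r j + (p' j - p j) * (f (Suc j) - f j)) * g i = 0"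
    using f g unfolding solves_resolvent_def by simp
qed

lemma solves_resolvent_increments:
  assumes f: "solves_resolvent n a p q r f" and i: "i < n"
  shows "(a + p i + q (Suc i)) * (f (Suc i) - f i)
         = (r (Suc i) - r i) + p (Suc i) * (f (Suc (Suc i)) - f (Suc i)) + q i * (f i - f (i - 1))"
proof -
  have "a * f i = r i + p i * (f (Suc i) - f i) + q i * (f (i - 1) - f i)"
    and "a * f (Suc i) = r (Suc i) + p (Suc i) * (f (Suc (Suc i)) - f (Suc i)) + q (Suc i) * (f i - f (Suc i))"
    using f i unfolding solves_resolvent_def by auto
  then show ?thesis by (simp add: algebra_simps)
qed

section \<open>Threshold policies of the admission control model\<close>

lemma policy_setpol: "policy n (setpol S)"
  unfolding policy_def setpol_def by simp

locale admission_model =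
  fixes n :: nat and \<alpha> :: real and lam mu h :: "nat \<Rightarrow> real"
  assumes alpha: "\<alpha> > 0"
    and lam_pos: "\<forall>i\<le>n. lam i > 0"
    and mu_pos: "\<forall>i. 1 \<le> i \<and> i \<le> n \<longrightarrow> mu i > 0"
    and mu0: "mu 0 = 0"
begin

lemma mu_nonneg: "i \<le> n \<Longrightarrow> mu i \<ge> 0"
  using mu_pos mu0 by (cases i) auto

lemma admit_rate_nonneg: "policy n u \<Longrightarrow> i \<le> n \<Longrightarrow> lam i * (1 - shutp n u i) \<ge> 0"
  using lam_pos unfolding policy_def shutp_def by auto

lemma mu_mult_back_increment: "mu i * (f i - f (i - 1)) = mu i * (f (Suc (i - 1)) - f (i - 1))"
  using mu0 by (cases i) simp_all

lemma evalm_solves: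
  assumes u: "policy n u"
  shows "solves_resolvent n \<alpha> (\<lambda>i. lam i * (1 - shutp n u i)) mu r (evalm n \<alpha> lam mu r u)"
proof -
  let ?P = "solves_resolvent n \<alpha> (\<lambda>i. lam i * (1 - shutp n u i)) mu r"
  note p = admit_rate_nonneg[OF u]
  note solves_resolvent_exists[where p="\<lambda>i. lam i * (1 - shutp n u i)" and q=mu and r=r,
      OF alpha p mu_nonneg]
  then obtain f where f: "?P f" by blast
  have "\<exists>!f. ?P f"
  proof (rule ex1I)
    show "?P f" by (fact f)
    show "g = f" if "?P g" for g
      using solves_resolvent_unique[where p="\<lambda>i. lam i * (1 - shutp n u i)" and q=mu,
          OF alpha p mu_nonneg that f] .
  qed
  then have "?P (THE f. ?P f)" by (rule theI')
  then show ?thesis unfolding evalm_def solves_resolvent_def .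
qed

lemma evalm_eqI:
  assumes u: "policy n u" and f: "solves_resolvent n \<alpha> (\<lambda>i. lam i * (1 - shutp n u i)) mu r f"
  shows "evalm n \<alpha> lam mu r u = f"
  using solves_resolvent_unique[where p="\<lambda>i. lam i * (1 - shutp n u i)" and q=mu,
      OF alpha admit_rate_nonneg[OF u] mu_nonneg evalm_solves[OF u] f] .

lemma evalm_eq:
  assumes "policy n u" and "i \<le> n"
  shows "\<alpha> * evalm n \<alpha> lam mu r u i
           = r i + lam i * (1 - shutp n u i) * (evalm n \<alpha> lam mu r u (Suc i) - evalm n \<alpha> lam mu r u i)
             + mu i * (evalm n \<alpha> lam mu r u (i - 1) - evalm n \<alpha> lam mu r u i)"
  using evalm_solves[OF assms(1), of r] assms(2) unfolding solves_resolvent_def by simp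

lemma evalm_beyond: "policy n u \<Longrightarrow> i > n \<Longrightarrow> evalm n \<alpha> lam mu r u i = 0"
  using evalm_solves[of u r] unfolding solves_resolvent_def by simp

definition green :: "(nat \<Rightarrow> real) \<Rightarrow> nat \<Rightarrow> nat \<Rightarrow> real" where
  "green u j = evalm n \<alpha> lam mu (\<lambda>i. if i = j then 1 else 0) u"

lemma green_nonneg:
  assumes u: "policy n u" and i: "i \<le> n"
  shows "green u j i \<ge> 0"
  unfolding green_def
  by (rule solves_resolvent_nonneg[OF alpha _ _ _ evalm_solves[OF u] i])
    (simp_all add: admit_rate_nonneg[OF u] mu_nonneg)

lemma green_pos:
  assumes u: "policy n u" and j: "j \<le> n"
  shows "green u j j > 0"
  unfolding green_def
  by (rule solves_resolvent_pos[OF alpha _ _ _ evalm_solves[OF u] j])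
    (simp_all add: admit_rate_nonneg[OF u] mu_nonneg)

lemma evalm_switch:
  assumes u: "policy n u" and u': "policy n u'"
    and uu': "\<And>i. i \<noteq> j \<Longrightarrow> shutp n u i = shutp n u' i" and rr': "\<And>i. i \<noteq> j \<Longrightarrow> r i = r' i"
  shows "evalm n \<alpha> lam mu r' u' i = evalm n \<alpha> lam mu r u i
           + (r' j - r j + lam j * (shutp n u j - shutp n u' j)
                * (evalm n \<alpha> lam mu r u (Suc j) - evalm n \<alpha> lam mu r u j)) * green u' j i"
proof -
  have "\<And>i. i \<noteq> j \<Longrightarrow> lam i * (1 - shutp n u i) = lam i * (1 - shutp n u' i)"
    using uu' by simp
  note perturbed = solves_resolvent_perturb[OF evalm_solves[OF u] evalm_solves[OF u'] this rr']
  have "lam j * (1 - shutp n u' j) - lam j * (1 - shutp n u j) = lam j * (shutp n u j - shutp n u' j)"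
    by (simp add: algebra_simps)
  then show ?thesis
    using evalm_eqI[OF u' perturbed] unfolding green_def by simp
qed

definition thr_pol :: "nat \<Rightarrow> nat \<Rightarrow> real" where
  "thr_pol m = setpol (thr n (Suc m))"

lemma policy_thr_pol: "policy n (thr_pol m)"
  unfolding thr_pol_def by (rule policy_setpol)

lemma shutp_thr_pol: "m \<le> n \<Longrightarrow> shutp n (thr_pol m) i = (if m \<le> i then 1 else 0)"
  unfolding shutp_def thr_pol_def setpol_def thr_def by auto

definition v :: "nat \<Rightarrow> nat \<Rightarrow> real" where
  "v m = vm n \<alpha> lam mu h (thr_pol m)"

definition b :: "nat \<Rightarrow> nat \<Rightarrow> real" where
  "b m = bm n \<alpha> lam mu (thr_pol m)"

definition mcost :: "nat \<Rightarrow> nat \<Rightarrow> real" where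
  "mcost m i = v m (Suc i) - v m i"

definition mwork :: "nat \<Rightarrow> nat \<Rightarrow> real" where
  "mwork m i = 1 - (b m (Suc i) - b m i)"

text \<open>Deviating from \<open>thr_pol m\<close> by admitting instead of shutting in state \<open>i\<close> adds
  \<open>lam i * reduced_cost m \<nu> i\<close> to the \<open>\<nu>\<close>-charged cost rate (see \<open>charged_value_gap_eq\<close>).\<close>

definition reduced_cost :: "nat \<Rightarrow> real \<Rightarrow> nat \<Rightarrow> real" where
  "reduced_cost m \<nu> i = mcost m i - \<nu> * mwork m i"

definition kappa :: "nat \<Rightarrow> real" where
  "kappa i = \<alpha> + dlt (dd lam mu) (Suc i)"

definition hgap :: "nat \<Rightarrow> real \<Rightarrow> real" where
  "hgap i \<nu> = dlt h (Suc i) - \<nu> * kappa i"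

lemma wS_thr: "wS n \<alpha> lam mu (thr n (Suc m)) i = lam i * mwork m i"
  unfolding wS_def mwork_def b_def thr_pol_def ..

lemma reduced_cost_shift: "reduced_cost m \<nu> i = reduced_cost m \<nu>' i - (\<nu> - \<nu>') * mwork m i"
  unfolding reduced_cost_def by (simp add: algebra_simps)

lemma mcost_eq:
  assumes "i < n"
  shows "(\<alpha> + lam i * (1 - shutp n (thr_pol m) i) + mu (Suc i)) * mcost m i
       = dlt h (Suc i) + lam (Suc i) * (1 - shutp n (thr_pol m) (Suc i)) * mcost m (Suc i)
         + mu i * mcost m (i - 1)"
  using solves_resolvent_increments[OF evalm_solves[OF policy_thr_pol] assms, of m h]
  unfolding mcost_def v_def vm_def dlt_def mu_mult_back_increment by simp

lemma mwork_eq: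
  assumes "i < n"
  shows "(\<alpha> + lam i * (1 - shutp n (thr_pol m) i) + mu (Suc i)) * mwork m i
       = kappa i + lam (Suc i) * (1 - shutp n (thr_pol m) (Suc i)) * mwork m (Suc i)
         + mu i * mwork m (i - 1)"
proof -
  let ?s = "shutp n (thr_pol m)"
  have "(\<alpha> + lam i * (1 - ?s i) + mu (Suc i)) * (b m (Suc i) - b m i)
      = (lam (Suc i) * ?s (Suc i) - lam i * ?s i)
        + lam (Suc i) * (1 - ?s (Suc i)) * (b m (Suc (Suc i)) - b m (Suc i))
        + mu i * (b m (Suc (i - 1)) - b m (i - 1))"
    using solves_resolvent_increments[OF evalm_solves[OF policy_thr_pol] assms,
        of m "\<lambda>i. lam i * shutp n (thr_pol m) i"]
    unfolding b_def bm_def mu_mult_back_increment by simp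
  then show ?thesis
    unfolding mwork_def kappa_def dlt_def dd_def by (simp add: algebra_simps)
qed

lemma reduced_cost_shut_eq:
  assumes "m \<le> i" and "i < n"
  shows "(\<alpha> + mu (Suc i)) * reduced_cost m \<nu> i = hgap i \<nu> + mu i * reduced_cost m \<nu> (i - 1)"
proof -
  have "shutp n (thr_pol m) i = 1" "shutp n (thr_pol m) (Suc i) = 1"
    using shutp_thr_pol[of m] assms by auto
  then have "(\<alpha> + mu (Suc i)) * mcost m i = dlt h (Suc i) + mu i * mcost m (i - 1)"
    and "(\<alpha> + mu (Suc i)) * mwork m i = kappa i + mu i * mwork m (i - 1)"
    using mcost_eq[OF assms(2), of m] mwork_eq[OF assms(2), of m] by simp_all
  then show ?thesis unfolding reduced_cost_def hgap_def by (simp add: algebra_simps)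
qed

lemma values_admit_one_state:
  assumes u: "policy n u" and j: "m \<le> j" "j < n"
    and agree: "\<forall>i. i \<noteq> j \<longrightarrow> shutp n (thr_pol m) i = shutp n u i" and uj: "shutp n u j = 0"
  shows "vm n \<alpha> lam mu h u i = v m i + lam j * mcost m j * green u j i"
    and "bm n \<alpha> lam mu u i = b m i - lam j * mwork m j * green u j i"
proof -
  have at_j: "shutp n (thr_pol m) j = 1" using shutp_thr_pol[of m] j by simp
  note agree = agree[rule_format]
  show "vm n \<alpha> lam mu h u i = v m i + lam j * mcost m j * green u j i"
    using evalm_switch[where j=j and r=h and r'=h, OF policy_thr_pol u agree] at_j uj
    unfolding v_def vm_def mcost_def by simp
  have rr': "\<And>i. i \<noteq> j \<Longrightarrow> lam i * shutp n (thr_pol m) i = lam i * shutp n u i"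
    using agree by simp
  show "bm n \<alpha> lam mu u i = b m i - lam j * mwork m j * green u j i"
    using evalm_switch[where j=j and r="\<lambda>i. lam i * shutp n (thr_pol m) i"
        and r'="\<lambda>i. lam i * shutp n u i", OF policy_thr_pol u agree rr'] at_j uj
    unfolding b_def bm_def mwork_def by (simp add: algebra_simps)
qed

lemma reduced_cost_swap:
  assumes m: "m < n"
  shows "reduced_cost (Suc m) \<nu> i = reduced_cost m \<nu> i
           + lam m * reduced_cost m \<nu> m * (green (thr_pol (Suc m)) m (Suc i) - green (thr_pol (Suc m)) m i)"
proof -
  have "\<forall>i. i \<noteq> m \<longrightarrow> shutp n (thr_pol m) i = shutp n (thr_pol (Suc m)) i"
    and "shutp n (thr_pol (Suc m)) m = 0"
    using shutp_thr_pol[of m] shutp_thr_pol[of "Suc m"] m by auto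
  note admit = values_admit_one_state[OF policy_thr_pol order_refl m this]
  show ?thesis
    unfolding reduced_cost_def mcost_def mwork_def v_def[of "Suc m"] b_def[of "Suc m"] admit
    by (simp add: algebra_simps)
qed

lemma green_thr_pol_decreasing:
  assumes "m \<le> i" and "i < n"
  shows "green (thr_pol (Suc m)) m (Suc i) \<le> green (thr_pol (Suc m)) m i"
proof -
  let ?G = "green (thr_pol (Suc m)) m"
  have "shutp n (thr_pol (Suc m)) (Suc i) = 1" using shutp_thr_pol[of "Suc m"] assms by simp
  then have "\<alpha> * ?G (Suc i) = mu (Suc i) * (?G i - ?G (Suc i))"
    using evalm_eq[OF policy_thr_pol, of "Suc i"] assms unfolding green_def by simp
  moreover have "\<alpha> * ?G (Suc i) \<ge> 0" using green_nonneg[OF policy_thr_pol] alpha assms by simp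
  moreover have "mu (Suc i) > 0" using mu_pos assms by simp
  ultimately show ?thesis by (simp add: zero_le_mult_iff)
qed

lemma index_ratio_thr:
  assumes mj: "m \<le> j" and j: "j < n"
  defines "S \<equiv> thr n (Suc m)"
  shows "(vm n \<alpha> lam mu h (setpol (S - {j})) j - vm n \<alpha> lam mu h (setpol S) j)
       / (bm n \<alpha> lam mu (setpol S) j - bm n \<alpha> lam mu (setpol (S - {j})) j) = mcost m j / mwork m j"
proof -
  have S: "setpol S = thr_pol m" unfolding S_def thr_pol_def ..
  have "\<forall>i. i \<noteq> j \<longrightarrow> shutp n (thr_pol m) i = shutp n (setpol (S - {j})) i"
    and "shutp n (setpol (S - {j})) j = 0"
    unfolding shutp_def setpol_def thr_pol_def S_def using j by auto
  note admit = values_admit_one_state[OF policy_setpol mj j this]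
  let ?c = "lam j * green (setpol (S - {j})) j j"
  have "vm n \<alpha> lam mu h (setpol (S - {j})) j - vm n \<alpha> lam mu h (setpol S) j = ?c * mcost m j"
    and "bm n \<alpha> lam mu (setpol S) j - bm n \<alpha> lam mu (setpol (S - {j})) j = ?c * mwork m j"
    unfolding S admit v_def[symmetric] b_def[symmetric] by simp_all
  moreover have "?c > 0" using lam_pos green_pos[OF policy_setpol] j by simp
  ultimately show ?thesis by (metis less_irrefl mult_divide_mult_cancel_left)
qed

definition charged_value :: "real \<Rightarrow> (nat \<Rightarrow> real) \<Rightarrow> nat \<Rightarrow> real" where
  "charged_value \<nu> u i = vm n \<alpha> lam mu h u i + \<nu> * bm n \<alpha> lam mu u i"

lemma charged_value_solves:
  assumes "policy n u"
  shows "solves_resolvent n \<alpha> (\<lambda>i. lam i * (1 - shutp n u i)) mu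
           (\<lambda>i. h i + \<nu> * (lam i * shutp n u i)) (charged_value \<nu> u)"
  using solves_resolvent_lincomb[OF evalm_solves[OF assms] evalm_solves[OF assms]]
  unfolding charged_value_def vm_def bm_def .

lemma reduced_cost_charged_value:
  "reduced_cost m \<nu> i = charged_value \<nu> (thr_pol m) (Suc i) - charged_value \<nu> (thr_pol m) i - \<nu>"
  unfolding reduced_cost_def mcost_def mwork_def charged_value_def v_def b_def by (simp add: algebra_simps)

lemma charged_value_gap_eq:
  fixes \<nu> :: real
  assumes u: "policy n u" and w: "policy n w" and i: "i \<le> n"
  defines "F \<equiv> charged_value \<nu>"
  shows "\<alpha> * (F u i - F w i)
       = lam i * (1 - shutp n u i) * ((F u (Suc i) - F w (Suc i)) - (F u i - F w i))
         + mu i * ((F u (i - 1) - F w (i - 1)) - (F u i - F w i))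
         + lam i * (shutp n w i - shutp n u i) * (F w (Suc i) - F w i - \<nu>)"
proof -
  have "\<alpha> * F u i = h i + \<nu> * (lam i * shutp n u i)
          + lam i * (1 - shutp n u i) * (F u (Suc i) - F u i) + mu i * (F u (i - 1) - F u i)"
    and "\<alpha> * F w i = h i + \<nu> * (lam i * shutp n w i)
          + lam i * (1 - shutp n w i) * (F w (Suc i) - F w i) + mu i * (F w (i - 1) - F w i)"
    using charged_value_solves[OF u] charged_value_solves[OF w] i
    unfolding F_def solves_resolvent_def by auto
  then show ?thesis by (simp add: algebra_simps)
qed

lemma thr_pol_optimal:
  assumes m: "m \<le> n"
    and shut: "\<And>i. m \<le> i \<Longrightarrow> i < n \<Longrightarrow> reduced_cost m \<nu> i \<ge> 0"
    and admit: "\<And>i. i < m \<Longrightarrow> reduced_cost m \<nu> i \<le> 0"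
  shows "optimal n \<alpha> lam mu h \<nu> (thr_pol m)"
  unfolding optimal_def charged_value_def[symmetric]
proof (intro conjI allI impI policy_thr_pol)
  fix u i assume u: "policy n u" and i: "i \<le> n"
  let ?F = "charged_value \<nu>" and ?w = "thr_pol m"
  have gain: "lam k * (shutp n ?w k - shutp n u k) * (?F ?w (Suc k) - ?F ?w k - \<nu>) \<ge> 0"
    if "k \<le> n" for k
  proof (cases "k < n")
    case True
    have "0 \<le> shutp n u k" "shutp n u k \<le> 1" "lam k > 0"
      using u lam_pos that unfolding policy_def shutp_def by auto
    then show ?thesis
      using shut[of k] admit[of k] shutp_thr_pol[OF m, of k] True
      unfolding reduced_cost_charged_value[symmetric]
      by (cases "m \<le> k") (auto intro: mult_nonneg_nonpos mult_nonneg_nonneg)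
  next
    case False
    then show ?thesis unfolding shutp_def by simp
  qed
  have "?F u i - ?F ?w i \<ge> 0"
  proof (rule resolvent_minimum_principle[OF alpha _ mu_nonneg _ _ i])
    show "\<And>k. k \<le> n \<Longrightarrow> lam k * (1 - shutp n u k) \<ge> 0" by (rule admit_rate_nonneg[OF u])
    show "?F u (Suc n) - ?F ?w (Suc n) \<ge> 0"
      using evalm_beyond[OF u] evalm_beyond[OF policy_thr_pol] unfolding charged_value_def vm_def bm_def by simp
    show "lam k * (1 - shutp n u k) * ((?F u (Suc k) - ?F ?w (Suc k)) - (?F u k - ?F ?w k))
          + mu k * ((?F u (k - 1) - ?F ?w (k - 1)) - (?F u k - ?F ?w k)) \<le> \<alpha> * (?F u k - ?F ?w k)"
      if "k \<le> n" for k
      using charged_value_gap_eq[OF u policy_thr_pol[of m] that, of \<nu>] gain[OF that] by linarith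
  qed
  then show "?F ?w i \<le> ?F u i" by simp
qed

lemma reduced_cost_eq_0_if_same_charged_value:
  assumes m: "m \<le> n" and j: "j < m" and u: "policy n u" and uj: "u j = 1"
    and same: "\<And>i. i \<le> n \<Longrightarrow> charged_value \<nu> u i = charged_value \<nu> (thr_pol m) i"
  shows "reduced_cost m \<nu> j = 0"
proof -
  have "shutp n (thr_pol m) j = 0" using shutp_thr_pol[OF m] j by simp
  moreover have "shutp n u j = 1" using j m uj unfolding shutp_def by simp
  ultimately have "lam j * reduced_cost m \<nu> j = 0"
    using charged_value_gap_eq[OF u policy_thr_pol[of m], of j \<nu>] same[of j] same[of "Suc j"] same[of "j - 1"] j m
    unfolding reduced_cost_charged_value by simp
  moreover have "lam j > 0" using lam_pos j m by simp
  ultimately show ?thesis by simp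
qed

lemma optimal_charged_value_eq:
  assumes "optimal n \<alpha> lam mu h \<nu> u" and "optimal n \<alpha> lam mu h \<nu> w" and "i \<le> n"
  shows "charged_value \<nu> u i = charged_value \<nu> w i"
  using assms unfolding optimal_def charged_value_def by (meson order_antisym)

end

section \<open>PCL-indexability under the convexity conditions\<close>

locale admission_control = admission_model +
  assumes d_cond: "\<forall>i. 1 \<le> i \<and> i \<le> n - 1 \<longrightarrow>
                   0 \<le> dlt (dd lam mu) (i + 1) \<and> dlt (dd lam mu) (i + 1) \<le> dlt (dd lam mu) i"
    and d1: "dlt (dd lam mu) 1 > 0"
    and h_cond: "\<forall>i. 1 \<le> i \<and> i \<le> n - 1 \<longrightarrow> dlt h (i + 1) \<ge> dlt h i \<and> dlt h i \<ge> 0"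
begin

abbreviation nu :: "nat \<Rightarrow> real" where
  "nu \<equiv> nuidx n \<alpha> lam mu h"

declare nuidx.simps [simp del]

lemma kappa_pos:
  assumes "i < n"
  shows "kappa i > 0"
proof (cases i)
  case 0
  then show ?thesis using d1 alpha unfolding kappa_def by simp
next
  case (Suc k)
  then have i: "1 \<le> i \<and> i \<le> n - 1" using assms by arith
  show ?thesis using d_cond[rule_format, OF i] alpha unfolding kappa_def by simp
qed

lemma kappa_decreasing: "Suc i < n \<Longrightarrow> kappa (Suc i) \<le> kappa i"
  using d_cond unfolding kappa_def by auto

lemma dlt_h_increasing: "Suc i < n \<Longrightarrow> 0 \<le> dlt h (Suc i) \<and> dlt h (Suc i) \<le> dlt h (Suc (Suc i))"
  using h_cond by auto

text \<open>At a minimiser \<open>k\<close> of the marginal workload over the admitted states the recursion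
  \<open>mwork_eq\<close> gives \<open>(kappa k + lam (Suc k) * shutp (Suc k)) * mwork m k \<ge> kappa k > 0\<close>.\<close>

lemma mwork_pos_admitted:
  assumes m: "m \<le> n" and i: "i < m"
  shows "mwork m i > 0"
proof -
  have "{..<m} \<noteq> {}" using i by auto
  then obtain k where "is_arg_min (mwork m) (\<lambda>i. i \<in> {..<m}) k"
    using ex_is_arg_min_if_finite by blast
  then have k: "k < m" and kmin: "\<And>i. i < m \<Longrightarrow> mwork m k \<le> mwork m i"
    unfolding is_arg_min_def by (auto simp: not_less) (meson not_le)
  let ?s = "shutp n (thr_pol m) (Suc k)"
  have kn: "k < n" using k m by simp
  have "lam (Suc k) * (1 - ?s) * mwork m k \<le> lam (Suc k) * (1 - ?s) * mwork m (Suc k)"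
  proof (cases "Suc k < m")
    case True
    then show ?thesis using kmin lam_pos m by (simp add: shutp_thr_pol[OF m])
  next
    case False
    then show ?thesis using k by (simp add: shutp_thr_pol[OF m])
  qed
  moreover have "mu k * mwork m k \<le> mu k * mwork m (k - 1)"
    using kmin k mu_nonneg[of k] kn mu0 by (cases k) (simp_all add: mult_left_mono)
  ultimately have "(kappa k + lam (Suc k) * ?s) * mwork m k \<ge> kappa k"
    using mwork_eq[OF kn, of m] shutp_thr_pol[OF m, of k] k
    unfolding kappa_def dlt_def dd_def by (simp add: algebra_simps)
  moreover have "kappa k > 0" using kappa_pos kn by simp
  moreover have "lam (Suc k) * ?s \<ge> 0"
    using lam_pos kn by (simp add: shutp_thr_pol[OF m] less_imp_le)
  ultimately have "mwork m k > 0"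
    by (smt (verit) mult_nonneg_nonpos)
  then show ?thesis using kmin[OF i] by simp
qed

lemma mwork_pos:
  assumes m: "m \<le> n"
  shows "i < n \<Longrightarrow> mwork m i > 0"
proof (induction i rule: less_induct)
  case (less i)
  show ?case
  proof (cases "i < m")
    case True
    then show ?thesis using mwork_pos_admitted[OF m] by simp
  next
    case False
    have "mu i * mwork m (i - 1) \<ge> 0"
      using less.IH[of "i - 1"] less.prems mu_nonneg[of i] mu0 by (cases i) auto
    moreover have "(\<alpha> + mu (Suc i)) * mwork m i = kappa i + mu i * mwork m (i - 1)"
      using mwork_eq[OF less.prems, of m] shutp_thr_pol[OF m] False by simp
    moreover have "kappa i > 0" "\<alpha> + mu (Suc i) > 0"
      using kappa_pos alpha mu_nonneg[of "Suc i"] less.prems by simp_all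
    ultimately show ?thesis by (smt (verit) zero_less_mult_iff)
  qed
qed

text \<open>For \<open>j \<ge> 1\<close> this is the denominator \<open>\<alpha> + \<Delta>d\<^sub>j\<^sub>+\<^sub>1 + w\<^sub>j\<^sub>-\<^sub>1 / \<rho>\<^sub>j\<^sub>-\<^sub>1\<close> (workload of \<open>S\<^sub>j\<^sub>+\<^sub>1\<close>) in the
  recursion for \<open>\<nu>\<^sub>j\<close>, see \<open>nu_Suc\<close>.\<close>

definition nu_denom :: "nat \<Rightarrow> real" where
  "nu_denom j = kappa j + mu j * mwork j (j - 1)"

lemma nu_denom_pos: "j < n \<Longrightarrow> nu_denom j > 0"
  using kappa_pos[of j] mwork_pos[of j "j - 1"] mu_nonneg[of j] mu0
  unfolding nu_denom_def by (cases j) (simp_all add: add_pos_nonneg)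

lemma nu_0: "nu 0 = dlt h 1 / kappa 0"
  unfolding kappa_def nuidx.simps by simp

lemma nu_Suc:
  assumes "Suc j < n"
  shows "nu (Suc j) = nu j + hgap (Suc j) (nu j) / nu_denom (Suc j)"
proof -
  have "lam j > 0" using lam_pos assms by simp
  then have "wS n \<alpha> lam mu (thr n (j + 2)) j / rho lam mu j = mu (Suc j) * mwork (Suc j) j"
    using wS_thr[of "Suc j" j] unfolding rho_def by (simp add: numeral_2_eq_2)
  then show ?thesis
    unfolding nuidx.simps hgap_def nu_denom_def kappa_def by (simp add: numeral_2_eq_2)
qed

lemma reduced_cost_at_threshold:
  "j < n \<Longrightarrow> (\<alpha> + mu (Suc j)) * reduced_cost j \<nu> j = (nu j - \<nu>) * nu_denom j"
proof (induction j arbitrary: \<nu>)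
  case 0
  have "kappa 0 > 0" using kappa_pos 0 by simp
  then have "(nu 0 - \<nu>) * kappa 0 = hgap 0 \<nu>" unfolding nu_0 hgap_def by (simp add: field_simps)
  then show ?case
    using reduced_cost_shut_eq[of 0 0 \<nu>] 0 mu0 unfolding nu_denom_def by simp
next
  case (Suc j)
  have j: "j < n" using Suc.prems by simp
  have "\<alpha> + mu (Suc j) > 0" using alpha mu_nonneg[of "Suc j"] Suc.prems by simp
  then have "reduced_cost j (nu j) j = 0" using Suc.IH[OF j, of "nu j"] by simp
  then have "reduced_cost (Suc j) (nu j) j = 0" using reduced_cost_swap[OF j, of "nu j" j] by simp
  then have below: "reduced_cost (Suc j) \<nu> j = (nu j - \<nu>) * mwork (Suc j) j"
    using reduced_cost_shift[of "Suc j" \<nu> j "nu j"] by (simp add: algebra_simps)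
  have "(\<alpha> + mu (Suc (Suc j))) * reduced_cost (Suc j) \<nu> (Suc j)
      = hgap (Suc j) \<nu> + mu (Suc j) * reduced_cost (Suc j) \<nu> j"
    using reduced_cost_shut_eq[of "Suc j" "Suc j" \<nu>] Suc.prems by simp
  also have "\<dots> = hgap (Suc j) (nu j) - (\<nu> - nu j) * nu_denom (Suc j)"
    unfolding below hgap_def nu_denom_def by (simp add: algebra_simps)
  also have "hgap (Suc j) (nu j) = (nu (Suc j) - nu j) * nu_denom (Suc j)"
    using nu_Suc[OF Suc.prems] nu_denom_pos[OF Suc.prems] by simp
  finally show ?case by (simp add: algebra_simps)
qed

lemma reduced_cost_at_index: "j < n \<Longrightarrow> reduced_cost j (nu j) j = 0"
  using reduced_cost_at_threshold[of j "nu j"] alpha mu_nonneg[of "Suc j"] by simp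

lemma reduced_cost_swap_at_index: "j < n \<Longrightarrow> reduced_cost (Suc j) (nu j) i = reduced_cost j (nu j) i"
  using reduced_cost_swap[of j "nu j" i] reduced_cost_at_index by simp

lemma hgap_Suc_nonneg:
  assumes j: "Suc j < n" and nonneg: "hgap j \<nu> \<ge> 0"
  shows "hgap (Suc j) \<nu> \<ge> 0"
proof (cases "\<nu> \<le> 0")
  case True
  then have "\<nu> * kappa (Suc j) \<le> 0" using kappa_pos[OF j] by (simp add: mult_nonpos_nonneg)
  then show ?thesis using dlt_h_increasing[OF j] unfolding hgap_def by linarith
next
  case False
  then have "\<nu> * kappa (Suc j) \<le> \<nu> * kappa j" using kappa_decreasing[OF j] by simp
  then show ?thesis using dlt_h_increasing[OF j] nonneg unfolding hgap_def by linarith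
qed

lemma hgap_nonneg_above:
  assumes "j \<le> i" and "i < n" and "hgap j \<nu> \<ge> 0"
  shows "hgap i \<nu> \<ge> 0"
  using assms by (induction i rule: dec_induct) (auto intro: hgap_Suc_nonneg)

lemma hgap_antimono: "i < n \<Longrightarrow> \<nu> \<le> \<nu>' \<Longrightarrow> hgap i \<nu>' \<le> hgap i \<nu>"
  using kappa_pos[of i] unfolding hgap_def by (simp add: mult_right_mono)

lemma nu_le_Suc_if_hgap_nonneg:
  assumes "Suc j < n" and "hgap j (nu j) \<ge> 0"
  shows "nu j \<le> nu (Suc j)"
  using hgap_Suc_nonneg[OF assms] nu_Suc[OF assms(1)] nu_denom_pos[OF assms(1)] by simp

lemma hgap_at_index_nonneg: "j < n \<Longrightarrow> hgap j (nu j) \<ge> 0"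
proof (induction j)
  case 0
  then show ?case using kappa_pos[of 0] unfolding hgap_def nu_0 by simp
next
  case (Suc j)
  let ?\<nu> = "nu (Suc j)"
  have j: "j < n" using Suc.prems by simp
  have "reduced_cost (Suc j) ?\<nu> j = (nu j - ?\<nu>) * mwork (Suc j) j"
    using reduced_cost_shift[of "Suc j" ?\<nu> j "nu j"] reduced_cost_swap_at_index[OF j, of j]
      reduced_cost_at_index[OF j] by (simp add: algebra_simps)
  moreover have "nu j \<le> ?\<nu>" using nu_le_Suc_if_hgap_nonneg[OF Suc.prems Suc.IH[OF j]] .
  moreover have "mwork (Suc j) j > 0" using mwork_pos Suc.prems by simp
  ultimately have "reduced_cost (Suc j) ?\<nu> j \<le> 0" by (simp add: mult_nonpos_nonneg)
  moreover have "hgap (Suc j) ?\<nu> + mu (Suc j) * reduced_cost (Suc j) ?\<nu> j = 0"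
    using reduced_cost_shut_eq[of "Suc j" "Suc j" ?\<nu>] reduced_cost_at_index[OF Suc.prems] Suc.prems by simp
  moreover have "mu (Suc j) \<ge> 0" using mu_nonneg Suc.prems by simp
  ultimately show ?case by (smt (verit) mult_nonneg_nonpos)
qed

lemma nu_le_Suc: "Suc j < n \<Longrightarrow> nu j \<le> nu (Suc j)"
  using nu_le_Suc_if_hgap_nonneg hgap_at_index_nonneg by simp

lemma nu_mono: "i \<le> j \<Longrightarrow> j < n \<Longrightarrow> nu i \<le> nu j"
  by (rule lift_Suc_mono_le_ivl[of "{k. Suc k < n}"]) (auto intro: nu_le_Suc)

lemma reduced_cost_admitted_nonpos_at_index:
  "m < n \<Longrightarrow> i \<le> m \<Longrightarrow> reduced_cost (Suc m) (nu m) i \<le> 0"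
proof (induction m arbitrary: i)
  case 0
  then show ?case using reduced_cost_swap_at_index[of 0 0] reduced_cost_at_index[of 0] by simp
next
  case (Suc m)
  have m: "Suc m < n" using Suc.prems by simp
  have "reduced_cost (Suc m) (nu (Suc m)) i \<le> 0"
  proof (cases "i = Suc m")
    case True
    then show ?thesis using reduced_cost_at_index[OF m] by simp
  next
    case False
    then have i: "i \<le> m" using Suc.prems by simp
    have "reduced_cost (Suc m) (nu m) i \<le> 0" using Suc.IH[OF _ i] m by simp
    moreover have "nu m \<le> nu (Suc m)" using nu_le_Suc[OF m] .
    moreover have "mwork (Suc m) i > 0" using mwork_pos i m by simp
    ultimately show ?thesis
      using reduced_cost_shift[of "Suc m" "nu (Suc m)" i "nu m"] by (smt (verit) mult_nonneg_nonneg)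
  qed
  then show ?case using reduced_cost_swap_at_index[OF m] by simp
qed

lemma reduced_cost_admitted_neg:
  assumes k: "k < n" and i: "i \<le> k" and \<nu>: "nu k < \<nu>"
  shows "reduced_cost (Suc k) \<nu> i < 0"
proof -
  have "reduced_cost (Suc k) (nu k) i \<le> 0" using reduced_cost_admitted_nonpos_at_index[OF k i] .
  moreover have "mwork (Suc k) i > 0" using mwork_pos i k by simp
  ultimately show ?thesis
    using reduced_cost_shift[of "Suc k" \<nu> i "nu k"] \<nu> by (smt (verit) mult_pos_pos)
qed

lemma reduced_cost_shut_nonneg:
  assumes m: "m < n" and \<nu>: "\<nu> \<le> nu m" and i: "m \<le> i" "i < n"
  shows "reduced_cost m \<nu> i \<ge> 0"
  using i
proof (induction i rule: dec_induct)
  case base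
  have "(\<alpha> + mu (Suc m)) * reduced_cost m \<nu> m \<ge> 0"
    using reduced_cost_at_threshold[OF m, of \<nu>] nu_denom_pos[OF m] \<nu> by simp
  moreover have "\<alpha> + mu (Suc m) > 0" using alpha mu_nonneg[of "Suc m"] m by simp
  ultimately show ?case by (simp add: zero_le_mult_iff)
next
  case (step k)
  have "hgap m \<nu> \<ge> 0" using hgap_at_index_nonneg[OF m] hgap_antimono[OF m \<nu>] by simp
  then have "hgap (Suc k) \<nu> \<ge> 0" using hgap_nonneg_above[of m "Suc k"] step by simp
  moreover have "mu (Suc k) * reduced_cost m \<nu> k \<ge> 0" using step mu_nonneg[of "Suc k"] by simp
  ultimately have "(\<alpha> + mu (Suc (Suc k))) * reduced_cost m \<nu> (Suc k) \<ge> 0"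
    using reduced_cost_shut_eq[of m "Suc k" \<nu>] step by simp
  moreover have "\<alpha> + mu (Suc (Suc k)) > 0" using alpha mu_nonneg[of "Suc (Suc k)"] step by simp
  ultimately show ?case by (simp add: zero_le_mult_iff)
qed

text \<open>Lowering the threshold from \<open>k + 1\<close> to \<open>k\<close> can only decrease the reduced cost at
  \<open>j > k\<close>: the swap adds the nonpositive \<open>reduced_cost k (nu j) k\<close> times a nonpositive
  increment of the Green function.\<close>

lemma reduced_cost_at_index_nonpos:
  assumes "m \<le> j" and j: "j < n"
  shows "reduced_cost m (nu j) j \<le> 0"
  using assms(1)
proof (induction m rule: inc_induct)
  case base
  then show ?case using reduced_cost_at_index[OF j] by simp
next
  case (step k)
  have k: "k < n" using step j by simp
  have "(\<alpha> + mu (Suc k)) * reduced_cost k (nu j) k \<le> 0"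
    using reduced_cost_at_threshold[OF k, of "nu j"] nu_mono[of k j] nu_denom_pos[OF k] step j
    by (simp add: mult_nonpos_nonneg)
  moreover have "\<alpha> + mu (Suc k) > 0" using alpha mu_nonneg[of "Suc k"] k by simp
  ultimately have "reduced_cost k (nu j) k \<le> 0" by (simp add: mult_le_0_iff)
  then have "lam k * reduced_cost k (nu j) k \<le> 0"
    using lam_pos k by (simp add: mult_nonneg_nonpos less_imp_le)
  moreover have "green (thr_pol (Suc k)) k (Suc j) - green (thr_pol (Suc k)) k j \<le> 0"
    using green_thr_pol_decreasing[of k j] step j by simp
  ultimately have "reduced_cost k (nu j) j \<le> reduced_cost (Suc k) (nu j) j"
    using reduced_cost_swap[OF k, of "nu j" j] by (simp add: mult_nonpos_nonpos)
  then show ?case using step by simp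
qed

lemma index_threshold_exists: "\<exists>m\<le>n. \<forall>i<n. \<nu> \<le> nu i \<longleftrightarrow> m \<le> i"
proof (cases "\<exists>j<n. \<nu> \<le> nu j")
  case True
  define m where "m = (LEAST j. j < n \<and> \<nu> \<le> nu j)"
  have m: "m < n \<and> \<nu> \<le> nu m" unfolding m_def using True by (metis (mono_tags, lifting) LeastI)
  have "\<nu> \<le> nu i \<longleftrightarrow> m \<le> i" if "i < n" for i
    using that m nu_mono[of m i] Least_le[of "\<lambda>j. j < n \<and> \<nu> \<le> nu j" i] unfolding m_def[symmetric]
    by auto
  then show ?thesis using m by (auto intro: less_imp_le)
next
  case False
  then show ?thesis by auto
qed

lemma reduced_cost_neg_below_threshold:
  assumes m: "m \<le> n" and thr: "\<And>i. i < n \<Longrightarrow> \<nu> \<le> nu i \<longleftrightarrow> m \<le> i" and i: "i < m"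
  shows "reduced_cost m \<nu> i < 0"
proof -
  obtain k where k: "m = Suc k" using i by (cases m) auto
  then have "nu k < \<nu>" using thr[of k] m by auto
  then show ?thesis using reduced_cost_admitted_neg[of k i \<nu>] k m i by simp
qed

lemma thr_pol_optimal_at_threshold:
  assumes m: "m \<le> n" and thr: "\<And>i. i < n \<Longrightarrow> \<nu> \<le> nu i \<longleftrightarrow> m \<le> i"
  shows "optimal n \<alpha> lam mu h \<nu> (thr_pol m)"
proof (rule thr_pol_optimal[OF m])
  show "reduced_cost m \<nu> i \<ge> 0" if "m \<le> i" "i < n" for i
    using reduced_cost_shut_nonneg[of m \<nu> i] thr[of m] that by simp
  show "reduced_cost m \<nu> i \<le> 0" if "i < m" for i
    using reduced_cost_neg_below_threshold[OF m thr that] by simp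
qed

lemma shut_optimal_iff_above_threshold:
  assumes m: "m \<le> n" and thr: "\<And>i. i < n \<Longrightarrow> \<nu> \<le> nu i \<longleftrightarrow> m \<le> i" and j: "j < n"
  shows "shut_optimal n \<alpha> lam mu h \<nu> j \<longleftrightarrow> m \<le> j"
proof
  assume "m \<le> j"
  then have "thr_pol m j = 1" unfolding thr_pol_def setpol_def thr_def using j by simp
  then show "shut_optimal n \<alpha> lam mu h \<nu> j"
    using thr_pol_optimal_at_threshold[OF m thr] unfolding shut_optimal_def by blast
next
  assume "shut_optimal n \<alpha> lam mu h \<nu> j"
  then obtain u where u: "optimal n \<alpha> lam mu h \<nu> u" and uj: "u j = 1"
    unfolding shut_optimal_def by blast
  show "m \<le> j"
  proof (rule ccontr)
    assume "\<not> m \<le> j"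
    then have jm: "j < m" by simp
    have "policy n u" using u unfolding optimal_def by simp
    then have "reduced_cost m \<nu> j = 0"
      using reduced_cost_eq_0_if_same_charged_value[OF m jm \<open>policy n u\<close> uj]
        optimal_charged_value_eq[OF u thr_pol_optimal_at_threshold[OF m thr]] by blast
    then show False using reduced_cost_neg_below_threshold[OF m thr jm] by simp
  qed
qed

lemma marginal_workload_pos:
  assumes "S \<in> thrF n" and "i < n"
  shows "wS n \<alpha> lam mu S i > 0"
proof -
  obtain k where k: "k \<in> {1..n + 1}" and S: "S = thr n k" using assms(1) unfolding thrF_def by blast
  then have "S = thr n (Suc (k - 1))" and "k - 1 \<le> n" by auto
  then show ?thesis using wS_thr lam_pos mwork_pos assms(2) by simp
qed

lemma shut_optimal_set_eq:
  "{j. j < n \<and> shut_optimal n \<alpha> lam mu h \<nu> j} = {j. j < n \<and> \<nu> \<le> nu j}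
   \<and> {j. j < n \<and> \<nu> \<le> nu j} \<in> thrF n"
proof -
  obtain m where m: "m \<le> n" and thr: "\<And>i. i < n \<Longrightarrow> \<nu> \<le> nu i \<longleftrightarrow> m \<le> i"
    using index_threshold_exists by blast
  have "{j. j < n \<and> \<nu> \<le> nu j} = thr n (Suc m)" using thr unfolding thr_def by auto
  moreover have "thr n (Suc m) \<in> thrF n" using m unfolding thrF_def by simp
  ultimately show ?thesis
    using shut_optimal_iff_above_threshold[OF m thr] thr by auto
qed

lemma nu_eq_Max_index_ratio:
  assumes j: "j < n"
  shows "nu j = Max ((\<lambda>S. (vm n \<alpha> lam mu h (setpol (S - {j})) j - vm n \<alpha> lam mu h (setpol S) j)
                          / (bm n \<alpha> lam mu (setpol S) j - bm n \<alpha> lam mu (setpol (S - {j})) j))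
                     ` {S. S \<in> thr n ` {1..n} \<and> j \<in> S})"
    (is "_ = Max (?ratio ` ?F)")
proof (rule sym, rule Max_eqI)
  have "?F \<subseteq> thr n ` {1..n}" by blast
  then have "finite ?F" by (rule finite_subset) simp
  then show "finite (?ratio ` ?F)" by (rule finite_imageI)
next
  fix y assume "y \<in> ?ratio ` ?F"
  then obtain k where k: "k \<in> {1..n}" "j \<in> thr n k" and y: "y = ?ratio (thr n k)" by blast
  define m where "m = k - 1"
  have mj: "m \<le> j" and k: "k = Suc m" using k unfolding m_def thr_def by auto
  have "y = mcost m j / mwork m j" using index_ratio_thr[OF mj j] unfolding y k .
  moreover have "mwork m j > 0" using mwork_pos mj j by simp
  moreover have "reduced_cost m (nu j) j \<le> 0" using reduced_cost_at_index_nonpos[OF mj j] .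
  ultimately show "y \<le> nu j" unfolding reduced_cost_def by (simp add: pos_divide_le_eq)
next
  have "thr n (Suc j) \<in> thr n ` {1..n}" using j by (intro imageI) simp
  moreover have "j \<in> thr n (Suc j)" using j unfolding thr_def by simp
  ultimately have mem: "thr n (Suc j) \<in> ?F" by simp
  have "mcost j j = nu j * mwork j j" using reduced_cost_at_index[OF j] unfolding reduced_cost_def by simp
  then have "nu j = ?ratio (thr n (Suc j))"
    using index_ratio_thr[OF order_refl j] mwork_pos[of j j] j by simp
  from image_eqI[where f="?ratio", OF this mem] show "nu j \<in> ?ratio ` ?F" .
qed

end

theorem theorem12:
  fixes n :: nat and \<alpha> :: real and lam mu h :: "nat \<Rightarrow> real"
  assumes n: "n \<ge> 1" and alpha: "\<alpha> > 0"
    and lam_pos: "\<forall>i\<le>n. lam i > 0"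
    and mu_pos: "\<forall>i. 1 \<le> i \<and> i \<le> n \<longrightarrow> mu i > 0"
    and mu0: "mu 0 = 0"
    and d_cond: "\<forall>i. 1 \<le> i \<and> i \<le> n - 1 \<longrightarrow>
                   0 \<le> dlt (dd lam mu) (i + 1) \<and> dlt (dd lam mu) (i + 1) \<le> dlt (dd lam mu) i"
    and d1: "dlt (dd lam mu) 1 > 0"
    and h_cond: "\<forall>i. 1 \<le> i \<and> i \<le> n - 1 \<longrightarrow>
                   dlt h (i + 1) \<ge> dlt h i \<and> dlt h i \<ge> 0"
  shows "(\<forall>S\<in>thrF n. \<forall>i<n. wS n \<alpha> lam mu S i > 0)
       \<and> (\<forall>j. j + 1 < n \<longrightarrow> nuidx n \<alpha> lam mu h j \<le> nuidx n \<alpha> lam mu h (j + 1))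
       \<and> (\<forall>\<nu>::real. {j. j < n \<and> shut_optimal n \<alpha> lam mu h \<nu> j} = {j. j < n \<and> \<nu> \<le> nuidx n \<alpha> lam mu h j}
                   \<and> {j. j < n \<and> \<nu> \<le> nuidx n \<alpha> lam mu h j} \<in> thrF n)
       \<and> (\<forall>j<n. nuidx n \<alpha> lam mu h j =
            Max ((\<lambda>S. (vm n \<alpha> lam mu h (setpol (S - {j})) j - vm n \<alpha> lam mu h (setpol S) j)
                     / (bm n \<alpha> lam mu (setpol S) j - bm n \<alpha> lam mu (setpol (S - {j})) j))
                 ` {S. S \<in> thr n ` {1..n} \<and> j \<in> S}))"
proof -
  interpret admission_control n \<alpha> lam mu h
    using alpha lam_pos mu_pos mu0 d_cond d1 h_cond by unfold_locales
  show ?thesis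
    using marginal_workload_pos nu_le_Suc shut_optimal_set_eq nu_eq_Max_index_ratio by simp
qed

end
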